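(* Fix a finite horizon $T\in\mathbb{N}$, a time $t<T$, and a time-$t$ policy $\pi_t:\mathcal{S}\times\mathcal{C}\to\Delta(\mathcal{A})$. Let $K$ be an objective functional that is indifferent to mixtures. Let $\eta_{t+1},\eta'_{t+1}:\mathcal{S}\times\mathcal{C}\to\Delta(\mathbb{R})$ be two return distribution functions for time $t+1$ such that $(F_K\eta_{t+1})(s,c)\ge (F_K\eta'_{t+1})(s,c)$ for all $(s,c)\in\mathcal{S}\times\mathcal{C}$. Then $(F_K(\mathcal{T}^d_{\pi_t}\eta_{t+1}))(s,c)\ge (F_K(\mathcal{T}^d_{\pi_t}\eta'_{t+1}))(s,c)$ for all $(s,c)\in\mathcal{S}\times\mathcal{C}$.
   Context: Setting: a Markov decision process with state space $\mathcal{S}$, action space $\mathcal{A}$, transition kernel $P:\mathcal{S}\times\mathcal{A}\to\Delta(\mathcal{S})$ and reward distribution $R:\mathcal{S}\times\mathcal{A}\to\Delta(\mathbb{R})$. The stock space is $\mathcal{C}=\mathbb{R}$. A discount function $d:\mathbb{N}_0\to\mathbb{R}_{>0}$, $d_t\doteq d(t)$, satisfies $d_0=1$ and $d_{t+1}\le d_t$ for all $t$; the one-step discount factor is $\hat d_t\doteq d_{t+1}/d_t\in(0,1]$. For a return distribution function $\eta_{t+1}:\mathcal{S}\times\mathcal{C}\to\Delta(\mathbb{R})$ and a time-$t$ policy $\pi_t$, the time-dependent distributional Bellman operator is $(\mathcal{T}^d_{\pi_t}\eta_{t+1})(s,c)\doteq \mathrm{df}\big(R_{t+1}+\hat d_t\,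 G\big)$, where $A_t\sim\pi_t(\cdot\mid s,c)$, $S_{t+1}\sim P(\cdot\mid s,A_t)$, $R_{t+1}\sim R(\cdot\mid s,A_t)$, and conditionally $G\sim\eta_{t+1}\big(S_{t+1},(c+R_{t+1})/\hat d_t\big)$; $\mathrm{df}$ denotes the distribution of a random variable. For a statistical functional $K:\Delta(\mathbb{R})\to\mathbb{R}$ (write $K(X)\doteq K\,\mathrm{df}(X)$) and a time-$t$ return distribution function $\eta_t$, define $(F_K\eta_t)(s,c)\doteq K\,\mathrm{df}\big(d_tc+d_tG(s,c)\big)/d_t$ with $G(s,c)\sim\eta_t(s,c)$. $K$ is indifferent to mixtures if for all $\eta,\eta':\mathcal{S}\times\mathcal{C}\to\Delta(\mathbb{R})$ with $K\eta(s,c)\ge K\eta'(s,c)$ for all $(s,c)$, and any random variable $(S,C)$ with values in $\mathcal{S}\times\mathcal{C}$, one has $K(G(S,C))\ge K(G'(S,C))$, where $G(s,c)\sim\eta(s,c)$ and $G'(s,c)\sim\eta'(s,c)$. *)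

theory Defs
  imports "HOL-Probability.Probability"
begin

text \<open>Delta(X) is rendered as probability measures on the measurable space X
(elements of prob_algebra X); the stock space C = R carries the Borel sigma-algebra.\<close>

definition rdf :: "'s measure \<Rightarrow> ('s \<times> real \<Rightarrow> real measure) \<Rightarrow> bool" where
  "rdf SM \<eta> \<longleftrightarrow> \<eta> \<in> SM \<Otimes>\<^sub>M borel \<rightarrow>\<^sub>M prob_algebra borel"

definition dhat :: "(nat \<Rightarrow> real) \<Rightarrow> nat \<Rightarrow> real" where
  "dhat d t = d (Suc t) / d t"

definition bellman ::
  "('s \<times> 'a \<Rightarrow> 's measure) \<Rightarrow> ('s \<times> 'a \<Rightarrow> real measure) \<Rightarrow> (nat \<Rightarrow> real) \<Rightarrow> nat
   \<Rightarrow> ('s \<times> real \<Rightarrow> 'a measure) \<Rightarrow> ('s \<times> real \<Rightarrow> real measure) \<Rightarrow> 's \<times> real \<Rightarrow> real measure" where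
  "bellman P R d t \<pi> \<eta> = (\<lambda>(s, c).
     bind (\<pi> (s, c)) (\<lambda>a.
       bind (P (s, a) \<Otimes>\<^sub>M R (s, a)) (\<lambda>(s', r).
         distr (\<eta> (s', (c + r) / dhat d t)) borel (\<lambda>g. r + dhat d t * g))))"

definition FK :: "(real measure \<Rightarrow> real) \<Rightarrow> (nat \<Rightarrow> real) \<Rightarrow> nat
   \<Rightarrow> ('s \<times> real \<Rightarrow> real measure) \<Rightarrow> 's \<times> real \<Rightarrow> real" where
  "FK K d t \<eta> = (\<lambda>(s, c). K (distr (\<eta> (s, c)) borel (\<lambda>g. d t * c + d t * g)) / d t)"

definition indifferent_to_mixtures :: "'s measure \<Rightarrow> (real measure \<Rightarrow> real) \<Rightarrow> bool" where
  "indifferent_to_mixtures SM K \<longleftrightarrow>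
     (\<forall>\<eta> \<eta>'. rdf SM \<eta> \<longrightarrow> rdf SM \<eta>' \<longrightarrow>
        (\<forall>x \<in> space (SM \<Otimes>\<^sub>M borel). K (\<eta> x) \<ge> K (\<eta>' x)) \<longrightarrow>
        (\<forall>\<mu> \<in> space (prob_algebra (SM \<Otimes>\<^sub>M borel)).
            K (bind \<mu> \<eta>) \<ge> K (bind \<mu> \<eta>')))"

end

theory Submission
  imports Defs
begin

text \<open>Since d_t (c + r + dhat_t g) = d_(t+1) ((c + r) / dhat_t + g), the law of the
time-t total return d_t c + d_t G after one Bellman step is the mixture of the time-(t+1)
total-return laws over the law of the next state and stock (S', (c + R) / dhat_t). That
mixing distribution does not depend on the return distribution function, so indifference
to mixtures carries the pointwise order from time t+1 to time t.\<close>

definition total_return_law ::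
  "(nat \<Rightarrow> real) \<Rightarrow> nat \<Rightarrow> ('s \<times> real \<Rightarrow> real measure) \<Rightarrow> 's \<times> real \<Rightarrow> real measure" where
  "total_return_law d t \<eta> = (\<lambda>(s, c). distr (\<eta> (s, c)) borel (\<lambda>g. d t * c + d t * g))"

definition stock_transition ::
  "'s measure \<Rightarrow> ('s \<times> 'a \<Rightarrow> 's measure) \<Rightarrow> ('s \<times> 'a \<Rightarrow> real measure) \<Rightarrow> (nat \<Rightarrow> real) \<Rightarrow> nat
   \<Rightarrow> ('s \<times> real \<Rightarrow> 'a measure) \<Rightarrow> 's \<times> real \<Rightarrow> ('s \<times> real) measure" where
  "stock_transition SM P R d t \<pi> = (\<lambda>(s, c).
     distr (bind (\<pi> (s, c)) (\<lambda>a. P (s, a) \<Otimes>\<^sub>M R (s, a))) (SM \<Otimes>\<^sub>M borel)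
       (\<lambda>(s', r). (s', (c + r) / dhat d t)))"

lemma FK_eq_total_return_law: "FK K d t \<eta> x = K (total_return_law d t \<eta> x) / d t"
  by (simp add: FK_def total_return_law_def split: prod.split)

lemma rdf_total_return_law:
  assumes "rdf SM \<eta>"
  shows "rdf SM (total_return_law d t \<eta>)"
proof -
  have [measurable]: "\<eta> \<in> SM \<Otimes>\<^sub>M borel \<rightarrow>\<^sub>M prob_algebra borel"
    using assms by (simp add: rdf_def)
  show ?thesis
    unfolding rdf_def total_return_law_def by measurable
qed

lemma measurable_stock_transition:
  assumes [measurable]: "P \<in> SM \<Otimes>\<^sub>M AM \<rightarrow>\<^sub>M prob_algebra SM" "R \<in> SM \<Otimes>\<^sub>M AM \<rightarrow>\<^sub>M prob_algebra borel"
    "\<pi> \<in> SM \<Otimes>\<^sub>M borel \<rightarrow>\<^sub>M prob_algebra AM"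
  shows "stock_transition SM P R d t \<pi> \<in> SM \<Otimes>\<^sub>M borel \<rightarrow>\<^sub>M prob_algebra (SM \<Otimes>\<^sub>M borel)"
  unfolding stock_transition_def by measurable

lemma distr_discounted_return_step:
  assumes "sets N = sets borel" and d_pos: "\<And>n. d n > 0"
  shows "distr (distr N borel (\<lambda>g. r + dhat d t * g)) borel (\<lambda>g. d t * c + d t * g)
       = distr N borel (\<lambda>g. d (Suc t) * ((c + r) / dhat d t) + d (Suc t) * g)"
proof -
  have "(\<lambda>g. r + dhat d t * g) \<in> N \<rightarrow>\<^sub>M borel"
    unfolding measurable_cong_sets[OF assms(1) refl] by measurable
  then have "distr (distr N borel (\<lambda>g. r + dhat d t * g)) borel (\<lambda>g. d t * c + d t * g)
      = distr N borel (\<lambda>g. d t * c + d t * (r + dhat d t * g))"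
    by (subst distr_distr) (simp_all add: comp_def)
  also have "\<dots> = distr N borel (\<lambda>g. d (Suc t) * ((c + r) / dhat d t) + d (Suc t) * g)"
    using d_pos[of t] d_pos[of "Suc t"] by (intro distr_cong) (simp_all add: dhat_def field_simps)
  finally show ?thesis .
qed

lemma total_return_law_bellman:
  assumes [measurable]: "P \<in> SM \<Otimes>\<^sub>M AM \<rightarrow>\<^sub>M prob_algebra SM" "R \<in> SM \<Otimes>\<^sub>M AM \<rightarrow>\<^sub>M prob_algebra borel"
    "\<pi> \<in> SM \<Otimes>\<^sub>M borel \<rightarrow>\<^sub>M prob_algebra AM" "\<eta> \<in> SM \<Otimes>\<^sub>M borel \<rightarrow>\<^sub>M prob_algebra borel"
    and d_pos: "\<And>n. d n > 0" and s: "s \<in> space SM"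
  shows "total_return_law d t (bellman P R d t \<pi> \<eta>) (s, c)
       = bind (stock_transition SM P R d t \<pi> (s, c)) (total_return_law d (Suc t) \<eta>)"
proof -
  let ?PR = "\<lambda>a. P (s, a) \<Otimes>\<^sub>M R (s, a)"
  let ?T = "bind (\<pi> (s, c)) ?PR"
  let ?F = "\<lambda>(s', r). distr (\<eta> (s', (c + r) / dhat d t)) borel (\<lambda>g. r + dhat d t * g)"
  let ?h = "\<lambda>g. d t * c + d t * g"
  let ?\<phi> = "\<lambda>(s', r). (s', (c + r) / dhat d t)"
  have sc: "(s, c) \<in> space (SM \<Otimes>\<^sub>M borel)"
    using s by (simp add: space_pair_measure)
  have \<pi>_sets: "sets (\<pi> (s, c)) = sets AM"
    using measurable_space[OF assms(3) sc] by (simp add: space_prob_algebra)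
  have "?PR \<in> AM \<rightarrow>\<^sub>M prob_algebra (SM \<Otimes>\<^sub>M borel)"
    using s by measurable
  then have PR: "?PR \<in> \<pi> (s, c) \<rightarrow>\<^sub>M subprob_algebra (SM \<Otimes>\<^sub>M borel)"
    unfolding measurable_cong_sets[OF \<pi>_sets refl] by (rule measurable_prob_algebraD)
  have "(\<lambda>(s, c). bind (\<pi> (s, c)) (\<lambda>a. P (s, a) \<Otimes>\<^sub>M R (s, a)))
      \<in> SM \<Otimes>\<^sub>M borel \<rightarrow>\<^sub>M prob_algebra (SM \<Otimes>\<^sub>M borel)"
    by measurable
  from measurable_space[OF this sc]
  have T_sets: "sets ?T = sets (SM \<Otimes>\<^sub>M borel)" and T_ne: "space ?T \<noteq> {}"
    by (auto simp: space_prob_algebra prob_space.not_empty)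
  have F: "?F \<in> SM \<Otimes>\<^sub>M borel \<rightarrow>\<^sub>M subprob_algebra borel"
    by (rule measurable_prob_algebraD) measurable
  have "total_return_law d t (bellman P R d t \<pi> \<eta>) (s, c) = distr (bind ?T ?F) borel ?h"
    unfolding total_return_law_def bellman_def bind_assoc[OF PR F] by simp
  also have "\<dots> = bind ?T (\<lambda>x. distr (?F x) borel ?h)"
  proof (rule distr_bind[OF _ T_ne])
    show "?F \<in> ?T \<rightarrow>\<^sub>M subprob_algebra borel"
      unfolding measurable_cong_sets[OF T_sets refl] by (fact F)
  qed measurable
  also have "\<dots> = bind ?T (\<lambda>x. total_return_law d (Suc t) \<eta> (?\<phi> x))"
  proof (rule bind_cong[OF refl])
    fix x assume "x \<in> space ?T"
    then obtain s' r where x: "x = (s', r)" and "s' \<in> space SM"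
      using sets_eq_imp_space_eq[OF T_sets] by (auto simp: space_pair_measure)
    then have "sets (\<eta> (s', (c + r) / dhat d t)) = sets borel"
      using measurable_space[OF assms(4)] by (simp add: space_pair_measure space_prob_algebra)
    then show "distr (?F x) borel ?h = total_return_law d (Suc t) \<eta> (?\<phi> x)"
      unfolding x total_return_law_def by (simp add: distr_discounted_return_step d_pos)
  qed
  also have "\<dots> = bind (distr ?T (SM \<Otimes>\<^sub>M borel) ?\<phi>) (total_return_law d (Suc t) \<eta>)"
  proof (rule bind_distr[symmetric])
    show "?\<phi> \<in> ?T \<rightarrow>\<^sub>M SM \<Otimes>\<^sub>M borel"
      unfolding measurable_cong_sets[OF T_sets refl] by measurable
    show "total_return_law d (Suc t) \<eta> \<in> SM \<Otimes>\<^sub>M borel \<rightarrow>\<^sub>M subprob_algebra borel"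
      using rdf_total_return_law[of SM \<eta>] by (simp add: rdf_def measurable_prob_algebraD)
  qed (fact T_ne)
  finally show ?thesis
    unfolding stock_transition_def by simp
qed

theorem mainTheorem1:
  fixes SM :: "'s measure" and AM :: "'a measure"
    and P :: "'s \<times> 'a \<Rightarrow> 's measure" and R :: "'s \<times> 'a \<Rightarrow> real measure"
    and d :: "nat \<Rightarrow> real" and Thor t :: nat
    and \<pi> :: "'s \<times> real \<Rightarrow> 'a measure"
    and K :: "real measure \<Rightarrow> real"
    and \<eta> \<eta>' :: "'s \<times> real \<Rightarrow> real measure"
  assumes P_kernel: "P \<in> SM \<Otimes>\<^sub>M AM \<rightarrow>\<^sub>M prob_algebra SM"
    and R_kernel: "R \<in> SM \<Otimes>\<^sub>M AM \<rightarrow>\<^sub>M prob_algebra borel"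
    and d0: "d 0 = 1" and d_pos: "\<And>n. d n > 0" and d_mono: "\<And>n. d (Suc n) \<le> d n"
    and t_lt: "t < Thor"
    and \<pi>_kernel: "\<pi> \<in> SM \<Otimes>\<^sub>M borel \<rightarrow>\<^sub>M prob_algebra AM"
    and K_indiff: "indifferent_to_mixtures SM K"
    and \<eta>_rdf: "rdf SM \<eta>" and \<eta>'_rdf: "rdf SM \<eta>'"
    and dom: "\<And>s c. s \<in> space SM \<Longrightarrow> FK K d (Suc t) \<eta> (s, c) \<ge> FK K d (Suc t) \<eta>' (s, c)"
  shows "\<forall>s \<in> space SM. \<forall>c :: real.
           FK K d t (bellman P R d t \<pi> \<eta>) (s, c) \<ge> FK K d t (bellman P R d t \<pi> \<eta>') (s, c)"
proof (intro ballI allI)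
  fix s c assume s: "s \<in> space SM"
  have step_dom: "\<forall>x \<in> space (SM \<Otimes>\<^sub>M borel).
      K (total_return_law d (Suc t) \<eta> x) \<ge> K (total_return_law d (Suc t) \<eta>' x)"
  proof
    fix x :: "'s \<times> real" assume "x \<in> space (SM \<Otimes>\<^sub>M borel)"
    then obtain s' c' where x: "x = (s', c')" and s': "s' \<in> space SM"
      by (auto simp: space_pair_measure)
    show "K (total_return_law d (Suc t) \<eta> x) \<ge> K (total_return_law d (Suc t) \<eta>' x)"
      using dom[OF s', of c'] d_pos[of "Suc t"] unfolding x FK_eq_total_return_law
      by (simp add: divide_le_cancel)
  qed
  have mixing: "stock_transition SM P R d t \<pi> (s, c) \<in> space (prob_algebra (SM \<Otimes>\<^sub>M borel))"
    using measurable_space[OF measurable_stock_transition[OF P_kernel R_kernel \<pi>_kernel]] s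
    by (simp add: space_pair_measure)
  have "K (bind (stock_transition SM P R d t \<pi> (s, c)) (total_return_law d (Suc t) \<eta>))
      \<ge> K (bind (stock_transition SM P R d t \<pi> (s, c)) (total_return_law d (Suc t) \<eta>'))"
    using K_indiff rdf_total_return_law[OF \<eta>_rdf] rdf_total_return_law[OF \<eta>'_rdf] step_dom mixing
    unfolding indifferent_to_mixtures_def by blast
  then show "FK K d t (bellman P R d t \<pi> \<eta>) (s, c) \<ge> FK K d t (bellman P R d t \<pi> \<eta>') (s, c)"
    using \<eta>_rdf \<eta>'_rdf d_pos[of t] s
    by (simp add: FK_eq_total_return_law total_return_law_bellman[OF P_kernel R_kernel \<pi>_kernel _ d_pos]
        rdf_def divide_right_mono)
qed

end
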